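(* Let $V \subseteq \mathbb{R}^7$ be a linear subspace, let $V\lrcorner\varphi = \{v\lrcorner\varphi : v\in V\}$ and $\Lambda^2(V) = \mathrm{Span}\{u\wedge v : u,v\in V\}$, both subspaces of $\Lambda^2(\mathbb{R}^7)$. Then: - if $V = \mathbb{R}^7$, then $\Lambda^2(V)\cap(V\lrcorner\varphi) = \Lambda^2_7$; - if $V$ is a proper subspace, then $\Lambda^2(V)\cap(V\lrcorner\varphi) = \{0\}$.
   Context: Equip $\mathbb{R}^7$ with its standard inner product and basis. Let $\varphi = e_{123} - e_{167} - e_{527} - e_{563} - e_{415} - e_{426} - e_{437}$ ($e_{ijk} = e_i\wedge e_j\wedge e_k$). For $u,v$: $u\wedge v$ is the 2-form $(a,b)\mapsto \langle u,a\rangle\langle v,b\rangle - \langle u,b\rangle\langle v,a\rangle$; $u\lrcorner\varphi$ is the 2-form $(a,b)\mapsto\varphi(u,a,b)$. $\Lambda^2_7 = \{u\lrcorner\varphi : u\in\mathbb{R}^7\}$. *)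

theory Defs
  imports "HOL-Analysis.Analysis"
begin

text \<open>R^7 is modelled as real^7. The paper's basis index i in {1..7}
  corresponds to the index (of_nat (i - 1)) of the finite type 7.\<close>

definition idx :: "nat \<Rightarrow> 7" where
  "idx i = of_nat (i - 1)"

definition ebasis :: "nat \<Rightarrow> real^7" where
  "ebasis i = axis (idx i) 1"

text \<open>e_i \<and> e_j \<and> e_k as a trilinear alternating form (determinant convention).\<close>
definition e3 :: "nat \<Rightarrow> nat \<Rightarrow> nat \<Rightarrow> real^7 \<Rightarrow> real^7 \<Rightarrow> real^7 \<Rightarrow> real" where
  "e3 i j k a b c =
     (let ai = a \<bullet> ebasis i; aj = a \<bullet> ebasis j; ak = a \<bullet> ebasis k;
          bi = b \<bullet> ebasis i; bj = b \<bullet> ebasis j; bk = b \<bullet> ebasis k;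
          ci = c \<bullet> ebasis i; cj = c \<bullet> ebasis j; ck = c \<bullet> ebasis k
      in ai * (bj * ck - bk * cj) - aj * (bi * ck - bk * ci) + ak * (bi * cj - bj * ci))"

definition phi :: "real^7 \<Rightarrow> real^7 \<Rightarrow> real^7 \<Rightarrow> real" where
  "phi a b c = e3 1 2 3 a b c - e3 1 6 7 a b c - e3 5 2 7 a b c - e3 5 6 3 a b c
              - e3 4 1 5 a b c - e3 4 2 6 a b c - e3 4 3 7 a b c"

definition wedge :: "real^7 \<Rightarrow> real^7 \<Rightarrow> real^7 \<Rightarrow> real^7 \<Rightarrow> real" where
  "wedge u v = (\<lambda>a b. (u \<bullet> a) * (v \<bullet> b) - (u \<bullet> b) * (v \<bullet> a))"

definition contr :: "real^7 \<Rightarrow> real^7 \<Rightarrow> real^7 \<Rightarrow> real" where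
  "contr u = (\<lambda>a b. phi u a b)"

definition Lam2 :: "(real^7) set \<Rightarrow> (real^7 \<Rightarrow> real^7 \<Rightarrow> real) set" where
  "Lam2 V = {\<omega>. \<exists>(n::nat) (c::nat \<Rightarrow> real) u v. (\<forall>k<n. u k \<in> V \<and> v k \<in> V) \<and>
                 \<omega> = (\<lambda>a b. \<Sum>k<n. c k * wedge (u k) (v k) a b)}"

definition Lam2_7 :: "(real^7 \<Rightarrow> real^7 \<Rightarrow> real) set" where
  "Lam2_7 = {contr u | u. True}"

end

theory Submission
  imports Defs
begin

(* Every contraction u \<lrcorner> \<phi> is a combination of the 2-forms e_j \<and> e_k, which gives the case V = R^7.
   If V is proper, choose w \<noteq> 0 orthogonal to V. Every 2-form in \<Lambda>^2(V) vanishes when w is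
   inserted, so v \<lrcorner> \<phi> \<in> \<Lambda>^2(V) forces \<phi>(v, w, \<cdot>) = 0, i.e. the G2 cross product v \<times> w vanishes.
   Since v \<perp> w, the Lagrange identity |v \<times> w|^2 = |v|^2 |w|^2 - (v \<bullet> w)^2 then yields v = 0. *)

lemma exhaust_7:
  fixes x :: 7
  shows "x = 0 \<or> x = 1 \<or> x = 2 \<or> x = 3 \<or> x = 4 \<or> x = 5 \<or> x = 6"
proof (induct x)
  case (of_int z)
  then have "z = 0 \<or> z = 1 \<or> z = 2 \<or> z = 3 \<or> z = 4 \<or> z = 5 \<or> z = 6" by fastforce
  then show ?case by auto
qed

lemma UNIV_7: "(UNIV :: 7 set) = {0, 1, 2, 3, 4, 5, 6}"
  using exhaust_7 by auto

lemma inner_vec_7: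
  "(x :: real^7) \<bullet> y =
     x$0 * y$0 + x$1 * y$1 + x$2 * y$2 + x$3 * y$3 + x$4 * y$4 + x$5 * y$5 + x$6 * y$6"
  unfolding inner_vec_def UNIV_7 by simp

lemma inner_ebasis: "a \<bullet> ebasis i = a $ idx i"
  by (simp add: ebasis_def inner_axis)

definition g2_cross :: "real^7 \<Rightarrow> real^7 \<Rightarrow> real^7" where
  "g2_cross v w = (\<chi> j. phi v w (axis j 1))"

lemma inner_g2_cross_self:
  "g2_cross v w \<bullet> g2_cross v w = (v \<bullet> v) * (w \<bullet> w) - (v \<bullet> w)\<^sup>2"
  unfolding inner_vec_7 g2_cross_def vec_lambda_beta
  by (simp add: phi_def e3_def Let_def inner_ebasis idx_def axis_def) algebra

lemma g2_cross_eq_0_imp_eq_0: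
  assumes "g2_cross v w = 0" and "v \<bullet> w = 0" and "w \<noteq> 0"
  shows "v = 0"
proof -
  have "(v \<bullet> v) * (w \<bullet> w) = 0"
    using inner_g2_cross_self[of v w] assms(1,2) by simp
  then show ?thesis
    using assms(3) by simp
qed

lemma Lam2_zero: "(\<lambda>a b. 0) \<in> Lam2 V"
  unfolding Lam2_def by (rule CollectI, rule exI[of _ 0]) auto

lemma Lam2_add_wedge:
  assumes "f \<in> Lam2 V" and "x \<in> V" and "y \<in> V"
  shows "(\<lambda>a b. f a b + s * wedge x y a b) \<in> Lam2 V"
proof -
  obtain n :: nat and c u v where uv: "\<forall>k<n. u k \<in> V \<and> v k \<in> V"
    and f: "f = (\<lambda>a b. \<Sum>k<n. c k * wedge (u k) (v k) a b)"
    using assms(1) unfolding Lam2_def by blast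
  let ?c = "c(n := s)" and ?u = "u(n := x)" and ?v = "v(n := y)"
  have "\<forall>k<Suc n. ?u k \<in> V \<and> ?v k \<in> V"
    using uv assms(2,3) by auto
  moreover have "(\<lambda>a b. f a b + s * wedge x y a b) =
      (\<lambda>a b. \<Sum>k<Suc n. ?c k * wedge (?u k) (?v k) a b)"
    using f by (auto intro!: sum.cong)
  ultimately show ?thesis
    unfolding Lam2_def by blast
qed

lemma e3_eq_wedges:
  "e3 i j k u a b =
     (u \<bullet> ebasis i) * wedge (ebasis j) (ebasis k) a b
     - (u \<bullet> ebasis j) * wedge (ebasis i) (ebasis k) a b
     + (u \<bullet> ebasis k) * wedge (ebasis i) (ebasis j) a b"
  by (simp add: e3_def wedge_def Let_def inner_commute algebra_simps)

lemma Lam2_UNIV_add_e3: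
  assumes "f \<in> Lam2 UNIV"
  shows "(\<lambda>a b. f a b + s * e3 i j k u a b) \<in> Lam2 UNIV"
proof -
  have "(\<lambda>a b. f a b
      + (s * (u \<bullet> ebasis i)) * wedge (ebasis j) (ebasis k) a b
      + (- (s * (u \<bullet> ebasis j))) * wedge (ebasis i) (ebasis k) a b
      + (s * (u \<bullet> ebasis k)) * wedge (ebasis i) (ebasis j) a b) \<in> Lam2 UNIV"
    by (intro Lam2_add_wedge assms UNIV_I)
  then show ?thesis
    by (simp add: e3_eq_wedges algebra_simps)
qed

lemma contr_in_Lam2_UNIV: "contr u \<in> Lam2 UNIV"
proof -
  have "(\<lambda>a b. 0 + 1 * e3 1 2 3 u a b + (-1) * e3 1 6 7 u a b + (-1) * e3 5 2 7 u a b
      + (-1) * e3 5 6 3 u a b + (-1) * e3 4 1 5 u a b + (-1) * e3 4 2 6 u a b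
      + (-1) * e3 4 3 7 u a b) \<in> Lam2 UNIV"
    by (intro Lam2_UNIV_add_e3[where f = "\<lambda>a b. _ a b", simplified] Lam2_zero)
  then show ?thesis
    by (simp add: contr_def phi_def)
qed

lemma Lam2_vanishes_on_orthogonal:
  assumes "\<omega> \<in> Lam2 V" and "\<And>x. x \<in> V \<Longrightarrow> x \<bullet> w = 0"
  shows "\<omega> w b = 0"
proof -
  obtain n :: nat and c u v where uv: "\<forall>k<n. u k \<in> V \<and> v k \<in> V"
    and \<omega>: "\<omega> = (\<lambda>a b. \<Sum>k<n. c k * wedge (u k) (v k) a b)"
    using assms(1) unfolding Lam2_def by blast
  show ?thesis
    unfolding \<omega> wedge_def by (intro sum.neutral ballI) (simp add: uv assms(2))
qed

lemma contr_0: "contr 0 = (\<lambda>a b. 0)"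
  by (simp add: contr_def phi_def e3_def Let_def)

lemma Lam2_UNIV_inter_contr: "Lam2 UNIV \<inter> range contr = Lam2_7"
  unfolding Lam2_7_def using contr_in_Lam2_UNIV by auto

lemma Lam2_inter_contr_proper_subspace:
  assumes "subspace V" and "V \<noteq> UNIV"
  shows "Lam2 V \<inter> contr ` V = {\<lambda>a b. 0}"
proof -
  have span_V: "span V = V"
    using assms(1) by (simp add: span_eq_iff)
  have "span V \<subset> span UNIV"
    unfolding span_V span_UNIV using assms(2) by blast
  then obtain w where "w \<noteq> 0" and "\<And>y. y \<in> span V \<Longrightarrow> orthogonal w y"
    using orthogonal_to_subspace_exists_gen by blast
  then have w_perp: "x \<bullet> w = 0" if "x \<in> V" for x
    using that span_base by (fastforce simp: orthogonal_def inner_commute)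
  have "v = 0" if "v \<in> V" and "contr v \<in> Lam2 V" for v
  proof (rule g2_cross_eq_0_imp_eq_0)
    show "g2_cross v w = 0"
      using Lam2_vanishes_on_orthogonal[OF \<open>contr v \<in> Lam2 V\<close> w_perp]
      by (simp add: g2_cross_def contr_def vec_eq_iff)
  qed (use that w_perp \<open>w \<noteq> 0\<close> in auto)
  then show ?thesis
    using Lam2_zero contr_0 subspace_0[OF assms(1)] by force
qed

theorem lemma4p10:
  fixes V :: "(real^7) set"
  assumes "subspace V"
  shows "(V = UNIV \<longrightarrow> Lam2 V \<inter> contr ` V = Lam2_7)
       \<and> (V \<noteq> UNIV \<longrightarrow> Lam2 V \<inter> contr ` V = {\<lambda>a b. 0})"
  using Lam2_UNIV_inter_contr Lam2_inter_contr_proper_subspace[OF assms] by blast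

end
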